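(* With $F(q)$ as in the context, write $F(q)=\exp\left(\sum_{d\ge1}y'_dq^d\right)$. Then for every $d\ge1$, $$y'_d=\sum_{0<d_1<\dots<d_r=d}\frac{y_{d_1}\prod_{i=2}^r\left(x_{d_i-d_{i-1}}d_{i-1}\right)}{r!}.$$
   Context: $x_1,x_2,\dots,y_1,y_2,\dots$ are indeterminates and $F(q)=\sum_{d\ge0}\sum_{0=d_0<d_1<\dots<d_r=d}\frac{\prod_{i=1}^r(y_{d_i-d_{i-1}}+x_{d_i-d_{i-1}}d_{i-1})}{r!}q^d$, a formal power series in $q$ with constant term $1$ and coefficients in $\mathbb Q[x_k,y_k]_{k\ge1}$. *)

theory Defs
  imports "HOL-Computational_Algebra.Formal_Power_Series"
begin

text \<open>Chains 0 = d_0 < d_1 < ... < d_r = d, encoded by the list [d_1, ..., d_r]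
  (so the full chain is 0 # ds; the empty list is the chain with r = 0, only for d = 0).\<close>
definition chains :: "nat \<Rightarrow> nat list set" where
  "chains d = {ds. sorted_wrt (<) (0 # ds) \<and> last (0 # ds) = d}"

text \<open>The coefficient of q^d in F(q), with the indeterminates x_k, y_k
  specialised to arbitrary elements of a field of characteristic 0.\<close>
definition F_coeff :: "(nat \<Rightarrow> 'a::field_char_0) \<Rightarrow> (nat \<Rightarrow> 'a) \<Rightarrow> nat \<Rightarrow> 'a" where
  "F_coeff x y d = (\<Sum>ds\<in>chains d. let L = 0 # ds in
      (\<Prod>i\<in>{1..length ds}. y (L!i - L!(i-1)) + x (L!i - L!(i-1)) * of_nat (L!(i-1)))
      / fact (length ds))"

definition F_series :: "(nat \<Rightarrow> 'a::field_char_0) \<Rightarrow> (nat \<Rightarrow> 'a) \<Rightarrow> 'a fps" where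
  "F_series x y = Abs_fps (F_coeff x y)"

end

theory Submission
  imports Defs
begin

(*
  Write X = sum x_k q^k, Y = sum y_k q^k and theta = q d/dq. Splitting off the last step of a
  chain shows that n! times the contribution of the chains of length n to F is (Y + D)^n 1 for
  the derivation D = X theta, while the n-th term of the claimed series for log F is
  D^(n-1) Y / n!. Introduce a second variable t and put P = sum_n (Y + D)^n 1 t^n / n! and
  G = sum_(n>=1) D^(n-1) Y t^n / n!. Uniqueness of solutions of linear ODEs in t gives first
  dP/dt = (dG/dt) P and then theta P = (theta G) P. The coefficient of t^n is O(q^n), so we
  may set t = 1, which gives theta F = theta G(1) F. Since also theta F = theta (sum y'_d q^d) F,
  the two series agree.
*)

unbundle fps_syntax

definition chains_len :: "nat \<Rightarrow> nat \<Rightarrow> nat list set" where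
  "chains_len n d = {ds \<in> chains d. length ds = n}"

definition chain_weight :: "(nat \<Rightarrow> nat \<Rightarrow> 'a::comm_monoid_mult) \<Rightarrow> nat list \<Rightarrow> 'a" where
  "chain_weight w ds = (\<Prod>i\<in>{1..length ds}. w ((0#ds)!(i-1)) ((0#ds)!i))"

definition chain_sum :: "(nat \<Rightarrow> nat \<Rightarrow> 'a::comm_semiring_1) \<Rightarrow> nat \<Rightarrow> nat \<Rightarrow> 'a" where
  "chain_sum w n d = (\<Sum>ds\<in>chains_len n d. chain_weight w ds)"

lemma sorted_wrt_less_le_last:
  "sorted_wrt (<) xs \<Longrightarrow> (v::'a::order) \<in> set xs \<Longrightarrow> v \<le> last xs"
proof (induction xs)
  case (Cons a xs)
  show ?case
  proof (cases "xs = []")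
    case False
    then have "last xs \<in> set xs" by simp
    then show ?thesis using Cons by (auto simp: less_imp_le)
  qed (use Cons in auto)
qed simp

lemma chain_set_subset:
  assumes "ds \<in> chains d" shows "set ds \<subseteq> {1..d}"
proof
  fix v assume v: "v \<in> set ds"
  have s: "sorted_wrt (<) (0#ds)" and l: "last (0#ds) = d" using assms by (auto simp: chains_def)
  have "v \<le> d" using sorted_wrt_less_le_last[OF s, of v] v l by simp
  moreover have "0 < v" using s v by simp
  ultimately show "v \<in> {1..d}" by simp
qed

lemma chain_length_le:
  assumes "ds \<in> chains d" shows "length ds \<le> d"
proof -
  have "distinct ds" using assms by (simp add: chains_def strict_sorted_iff)
  then have "length ds = card (set ds)" by (simp add: distinct_card)
  also have "\<dots> \<le> card {1..d}" using chain_set_subset[OF assms] by (intro card_mono) auto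
  finally show ?thesis by simp
qed

lemma finite_chains: "finite (chains d)"
proof (rule finite_subset)
  show "chains d \<subseteq> {xs. set xs \<subseteq> {..d} \<and> length xs \<le> d}"
    using chain_set_subset chain_length_le by fastforce
  show "finite {xs. set xs \<subseteq> {..d} \<and> length xs \<le> d}" by (rule finite_lists_length_le) auto
qed

lemma finite_chains_len: "finite (chains_len n d)"
  using finite_chains by (simp add: chains_len_def)

lemma chains_len_eq_empty: "d < n \<Longrightarrow> chains_len n d = {}"
  using chain_length_le by (fastforce simp: chains_len_def)

lemma chain_sum_eq_0: "d < n \<Longrightarrow> chain_sum w n d = 0"
  by (simp add: chain_sum_def chains_len_eq_empty)

lemma chains_len_0: "chains_len 0 d = (if d = 0 then {[]} else {})"
  by (auto simp: chains_len_def chains_def)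

lemma chain_sum_0: "chain_sum w 0 d = (if d = 0 then 1 else 0)"
  by (simp add: chain_sum_def chains_len_0 chain_weight_def)

lemma chains_len_Suc:
  "chains_len (Suc n) d = (\<lambda>(e, ds). ds @ [d]) ` (SIGMA e:{..<d}. chains_len n e)"
proof (intro equalityI subsetI)
  fix ds' assume "ds' \<in> chains_len (Suc n) d"
  then have ne: "ds' \<noteq> []" and s: "sorted_wrt (<) (0#ds')" and l: "last ds' = d"
    and len: "length ds' = Suc n"
    by (auto simp: chains_len_def chains_def)
  define ds where "ds = butlast ds'"
  have eq: "ds' = ds @ [d]" using ne l by (metis append_butlast_last_id ds_def)
  have s': "sorted_wrt (<) (0#ds)" and lt: "\<forall>v\<in>set (0#ds). v < d"
    using s unfolding eq by (simp_all add: sorted_wrt_append)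
  have "last (0#ds) < d" using lt last_in_set by blast
  moreover have "ds \<in> chains_len n (last (0#ds))"
    using s' len by (simp add: chains_len_def chains_def ds_def)
  ultimately show "ds' \<in> (\<lambda>(e, ds). ds @ [d]) ` (SIGMA e:{..<d}. chains_len n e)"
    using eq by force
next
  fix ds' assume "ds' \<in> (\<lambda>(e, ds). ds @ [d]) ` (SIGMA e:{..<d}. chains_len n e)"
  then obtain e ds where e: "e < d" and ds: "ds \<in> chains_len n e" and eq: "ds' = ds @ [d]"
    by auto
  have s: "sorted_wrt (<) (0#ds)" and l: "last (0#ds) = e" and len: "length ds = n"
    using ds by (auto simp: chains_len_def chains_def)
  have "\<forall>v\<in>set (0#ds). v < d" using sorted_wrt_less_le_last[OF s] l e by fastforce
  then have "sorted_wrt (<) (0 # ds @ [d])" using s by (simp add: sorted_wrt_append)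
  then show "ds' \<in> chains_len (Suc n) d" using eq len by (simp add: chains_len_def chains_def)
qed

lemma chain_weight_snoc: "chain_weight w (ds @ [d]) = chain_weight w ds * w (last (0#ds)) d"
proof -
  let ?L = "(0#ds) @ [d]" and ?m = "length ds"
  have "chain_weight w (ds @ [d]) = (\<Prod>i\<in>{1..Suc ?m}. w (?L!(i-1)) (?L!i))"
    by (simp add: chain_weight_def)
  also have "\<dots> = (\<Prod>i\<in>{1..?m}. w (?L!(i-1)) (?L!i)) * w (?L!?m) d"
    by (simp add: prod.nat_ivl_Suc' nth_append)
  also have "(\<Prod>i\<in>{1..?m}. w (?L!(i-1)) (?L!i)) = chain_weight w ds"
    unfolding chain_weight_def by (intro prod.cong refl) (auto simp: nth_append nth_Cons')
  also have "?L!?m = last (0#ds)"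
    by (simp add: nth_append last_conv_nth)
  finally show ?thesis .
qed

lemma chain_sum_Suc: "chain_sum w (Suc n) d = (\<Sum>e<d. chain_sum w n e * w e d)"
proof -
  have inj: "inj_on (\<lambda>(e, ds). ds @ [d]) (SIGMA e:{..<d}. chains_len n e)"
    unfolding inj_on_def chains_len_def chains_def by auto
  have "chain_sum w (Suc n) d =
      (\<Sum>(e, ds)\<in>(SIGMA e:{..<d}. chains_len n e). chain_weight w (ds @ [d]))"
    unfolding chain_sum_def chains_len_Suc by (subst sum.reindex[OF inj]) (simp add: case_prod_unfold)
  also have "\<dots> = (\<Sum>e<d. \<Sum>ds\<in>chains_len n e. chain_weight w (ds @ [d]))"
    by (rule sum.Sigma[symmetric]) (auto simp: finite_chains_len)
  also have "\<dots> = (\<Sum>e<d. \<Sum>ds\<in>chains_len n e. chain_weight w ds * w e d)"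
    by (intro sum.cong refl) (auto simp: chain_weight_snoc chains_len_def chains_def)
  also have "\<dots> = (\<Sum>e<d. chain_sum w n e * w e d)"
    by (simp add: chain_sum_def sum_distrib_right)
  finally show ?thesis .
qed

lemma chain_sum_1: "chain_sum w (Suc 0) d = (if d = 0 then 0 else w 0 d)"
  by (simp add: chain_sum_Suc chain_sum_0 if_distrib[of "\<lambda>u. u * _"] cong: if_cong)

lemma sum_chains_by_length:
  "(\<Sum>ds\<in>chains d. f ds) = (\<Sum>n\<le>d. \<Sum>ds\<in>chains_len n d. f ds)"
proof -
  have "(\<Sum>ds\<in>chains d. f ds) = (\<Sum>ds\<in>chains d. \<Sum>n\<le>d. if length ds = n then f ds else 0)"
    using chain_length_le by (intro sum.cong refl) (simp add: sum.delta)
  also have "\<dots> = (\<Sum>n\<le>d. \<Sum>ds\<in>chains d. if length ds = n then f ds else 0)"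
    by (rule sum.swap)
  also have "\<dots> = (\<Sum>n\<le>d. \<Sum>ds\<in>chains_len n d. f ds)"
    unfolding chains_len_def by (simp add: sum.inter_filter finite_chains)
  finally show ?thesis .
qed

section \<open>The Euler operator q d/dq\<close>

definition fps_theta :: "'a::comm_ring_1 fps \<Rightarrow> 'a fps" where
  "fps_theta f = fps_X * fps_deriv f"

lemma fps_theta_nth [simp]: "fps_theta f $ n = of_nat n * f $ n"
  by (cases n) (simp_all add: fps_theta_def)

lemma fps_theta_0 [simp]: "fps_theta 0 = 0"
  by (simp add: fps_theta_def)

lemma fps_theta_1 [simp]: "fps_theta 1 = 0"
  by (simp add: fps_theta_def)

lemma fps_theta_diff [simp]: "fps_theta (f - g) = fps_theta f - fps_theta g"
  by (simp add: fps_theta_def algebra_simps)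

lemma fps_theta_mult: "fps_theta (f * g) = fps_theta f * g + f * fps_theta g"
  by (simp add: fps_theta_def algebra_simps)

lemma fps_theta_sum: "fps_theta (\<Sum>i\<in>A. f i) = (\<Sum>i\<in>A. fps_theta (f i))"
  by (simp add: fps_theta_def fps_deriv_sum sum_distrib_left)

lemma fps_theta_mult_const [simp]: "fps_theta (f * fps_const c) = fps_theta f * fps_const c"
  by (simp add: fps_theta_def algebra_simps)

lemma fps_theta_of_nat_mult [simp]: "fps_theta (of_nat k * f) = of_nat k * fps_theta f"
  by (simp add: fps_theta_def algebra_simps)

lemma fps_theta_eq_imp_nth_eq:
  fixes f g :: "'a::{idom,semiring_char_0} fps"
  assumes "fps_theta f = fps_theta g" "n > 0"
  shows "f $ n = g $ n"
proof -
  have "of_nat n * f $ n = of_nat n * g $ n"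
    using arg_cong[OF assms(1), of "\<lambda>h. h $ n"] by simp
  then show ?thesis using assms(2) by simp
qed

section \<open>Series in two variables\<close>

text \<open>In \<^typ>\<open>'a fps fps\<close> the outer variable is t and the inner one q.\<close>

definition fps_theta_coeffs :: "'a::comm_ring_1 fps fps \<Rightarrow> 'a fps fps" where
  "fps_theta_coeffs P = Abs_fps (\<lambda>n. fps_theta (P $ n))"

lemma fps_theta_coeffs_nth [simp]: "fps_theta_coeffs P $ n = fps_theta (P $ n)"
  by (simp add: fps_theta_coeffs_def)

lemma fps_theta_coeffs_diff [simp]:
  "fps_theta_coeffs (P - Q) = fps_theta_coeffs P - fps_theta_coeffs Q"
  by (rule fps_ext) simp

lemma fps_theta_coeffs_mult:
  "fps_theta_coeffs (P * Q) = fps_theta_coeffs P * Q + P * fps_theta_coeffs Q"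
  by (rule fps_ext) (simp add: fps_mult_nth fps_theta_sum fps_theta_mult sum.distrib)

lemma fps_theta_coeffs_deriv: "fps_deriv (fps_theta_coeffs P) = fps_theta_coeffs (fps_deriv P)"
  by (rule fps_ext) (simp del: of_nat_Suc)

lemma fps_eq_0_by_deriv:
  fixes W :: "'a::{ring_1_no_zero_divisors,semiring_char_0} fps"
  assumes "W $ 0 = 0" and "\<And>n. (\<And>k. k \<le> n \<Longrightarrow> W $ k = 0) \<Longrightarrow> fps_deriv W $ n = 0"
  shows "W = 0"
proof -
  have "\<forall>k\<le>n. W $ k = 0" for n
  proof (induction n)
    case (Suc n)
    then have "of_nat (Suc n) * W $ Suc n = 0" using assms(2)[of n] by simp
    then show ?case using Suc by (auto simp: le_Suc_eq simp del: of_nat_Suc)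
  qed (simp add: assms(1))
  then show ?thesis by (intro fps_ext) (simp, blast)
qed

definition egf :: "(nat \<Rightarrow> 'a::field_char_0 fps) \<Rightarrow> 'a fps fps" where
  "egf a = Abs_fps (\<lambda>n. fps_const (inverse (fact n)) * a n)"

lemma egf_nth [simp]: "egf a $ n = fps_const (inverse (fact n)) * a n"
  by (simp add: egf_def)

lemma fps_deriv_egf: "fps_deriv (egf a) = egf (\<lambda>n. a (Suc n))"
proof (rule fps_ext)
  fix n
  have "(of_nat (Suc n) :: 'a) * inverse (fact (Suc n)) = inverse (fact n)"
    by (simp add: field_simps del: of_nat_Suc)
  then have "(of_nat (Suc n) :: 'a fps) * fps_const (inverse (fact (Suc n))) =
      fps_const (inverse (fact n))"
    by (metis fps_const_mult fps_of_nat)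
  then show "fps_deriv (egf a) $ n = egf (\<lambda>n. a (Suc n)) $ n"
    by (simp add: mult.assoc del: of_nat_Suc)
qed

text \<open>Here a n = (Y + D)^n 1 and b n = D^n Y for the derivation D = X theta. The two lemmas
  below say that egf a = exp (egf (case_nat 0 b)); they are stated through logarithmic derivatives
  because \<^typ>\<open>'a fps\<close> is not a field, so exp cannot be composed with a series in t.\<close>

context
  fixes X Y :: "'a::field_char_0 fps" and a b :: "nat \<Rightarrow> 'a fps"
  assumes a_0: "a 0 = 1" and a_Suc: "\<And>n. a (Suc n) = a n * Y + fps_theta (a n) * X"
    and b_0: "b 0 = Y" and b_Suc: "\<And>n. b (Suc n) = fps_theta (b n) * X"
begin

lemma fps_deriv_egf_a:
  "fps_deriv (egf a) = egf a * fps_const Y + fps_theta_coeffs (egf a) * fps_const X"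
  by (rule fps_ext) (simp add: fps_deriv_egf a_Suc algebra_simps)

lemma fps_deriv_egf_b: "fps_deriv (egf b) = fps_theta_coeffs (egf b) * fps_const X"
  by (rule fps_ext) (simp add: fps_deriv_egf b_Suc algebra_simps)

lemma fps_deriv_egf_a_eq_mult: "fps_deriv (egf a) = egf b * egf a"
proof -
  define L where "L Q = Q * fps_const Y + fps_theta_coeffs Q * fps_const X" for Q :: "'a fps fps"
  define V where "V = fps_deriv (egf a) - egf b * egf a"
  have L_diff: "L (Q - R) = L Q - L R" for Q R
    by (simp add: L_def algebra_simps)
  have L_mult: "L (egf b * Q) = egf b * L Q + fps_deriv (egf b) * Q" for Q
    by (simp add: L_def fps_deriv_egf_b fps_theta_coeffs_mult algebra_simps)
  have L_deriv: "fps_deriv (L Q) = L (fps_deriv Q)" for Q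
    by (simp add: L_def fps_theta_coeffs_deriv)
  have egf_a: "fps_deriv (egf a) = L (egf a)"
    by (simp add: L_def fps_deriv_egf_a)
  have "fps_deriv V =
      L (fps_deriv (egf a)) - (egf b * fps_deriv (egf a) + fps_deriv (egf b) * egf a)"
    by (simp add: V_def egf_a L_deriv algebra_simps)
  also have "\<dots> = L V"
    by (simp add: V_def L_diff L_mult egf_a)
  finally have V_deriv: "fps_deriv V = L V" .
  have "V = 0"
  proof (rule fps_eq_0_by_deriv)
    show "V $ 0 = 0" by (simp add: V_def fps_deriv_egf a_0 a_Suc b_0)
    fix n assume "\<And>k. k \<le> n \<Longrightarrow> V $ k = 0"
    then show "fps_deriv V $ n = 0" by (simp add: V_deriv L_def)
  qed
  then show ?thesis by (simp add: V_def)
qed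

lemma fps_theta_coeffs_egf_a_eq_mult:
  "fps_theta_coeffs (egf a) = fps_theta_coeffs (egf (case_nat 0 b)) * egf a"
proof -
  define W where "W = fps_theta_coeffs (egf a) - fps_theta_coeffs (egf (case_nat 0 b)) * egf a"
  have "fps_deriv (egf (case_nat 0 b)) = egf b"
    by (simp add: fps_deriv_egf)
  then have W_deriv: "fps_deriv W = egf b * W"
    by (simp add: W_def fps_theta_coeffs_deriv fps_deriv_egf_a_eq_mult fps_theta_coeffs_mult
        algebra_simps)
  have "W = 0"
  proof (rule fps_eq_0_by_deriv)
    show "W $ 0 = 0" by (simp add: W_def a_0)
    fix n assume "\<And>k. k \<le> n \<Longrightarrow> W $ k = 0"
    then show "fps_deriv W $ n = 0" by (simp add: W_deriv fps_mult_nth)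
  qed
  then show ?thesis by (simp add: W_def)
qed

end

definition fps_graded :: "'a::zero fps fps \<Rightarrow> bool" where
  "fps_graded P \<longleftrightarrow> (\<forall>n d. d < n \<longrightarrow> P $ n $ d = 0)"

section \<open>Substituting t = 1\<close>

text \<open>Truncating the sum at n = d agrees with substituting t = 1 only for graded P.\<close>

definition eval_at_one :: "'a::comm_monoid_add fps fps \<Rightarrow> 'a fps" where
  "eval_at_one P = Abs_fps (\<lambda>d. \<Sum>n\<le>d. P $ n $ d)"

lemma eval_at_one_nth: "eval_at_one P $ d = (\<Sum>n\<le>d. P $ n $ d)"
  by (simp add: eval_at_one_def)

lemma eval_at_one_nth_le:
  assumes "fps_graded P" "d \<le> N"
  shows "eval_at_one P $ d = (\<Sum>n\<le>N. P $ n $ d)"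
  unfolding eval_at_one_nth using assms
  by (intro sum.mono_neutral_left) (auto simp: fps_graded_def)

lemma fps_graded_egf: "(\<And>n d. d < n \<Longrightarrow> a n $ d = 0) \<Longrightarrow> fps_graded (egf a)"
  by (simp add: fps_graded_def)

lemma fps_graded_theta_coeffs: "fps_graded P \<Longrightarrow> fps_graded (fps_theta_coeffs P)"
  by (simp add: fps_graded_def)

lemma eval_at_one_theta_coeffs: "eval_at_one (fps_theta_coeffs P) = fps_theta (eval_at_one P)"
  by (rule fps_ext) (simp add: eval_at_one_nth sum_distrib_left)

lemma eval_at_one_mult:
  fixes P Q :: "'a::comm_ring_1 fps fps"
  assumes P: "fps_graded P" and Q: "fps_graded Q"
  shows "eval_at_one (P * Q) = eval_at_one P * eval_at_one Q"
proof (rule fps_ext)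
  fix d
  define f where "f i j e = P $ i $ e * Q $ j $ (d - e)" for i j e
  have vanish: "(\<Sum>e\<le>d. f i j e) = 0" if "d < i + j" for i j
  proof (rule sum.neutral, intro ballI)
    fix e assume "e \<in> {..d}"
    then have "e < i \<or> d - e < j" using that by auto
    then show "f i j e = 0" using P Q by (auto simp: f_def fps_graded_def)
  qed
  have "eval_at_one (P * Q) $ d = (\<Sum>n\<le>d. \<Sum>i\<le>n. \<Sum>e\<le>d. f i (n - i) e)"
    by (simp add: eval_at_one_nth fps_mult_nth fps_sum_nth f_def atLeast0AtMost)
  also have "\<dots> = (\<Sum>(i, j)\<in>{(i, j). i + j \<le> d}. \<Sum>e\<le>d. f i j e)"
    by (rule sum.triangle_reindex_eq[symmetric])
  also have "\<dots> = (\<Sum>(i, j)\<in>{..d} \<times> {..d}. \<Sum>e\<le>d. f i j e)"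
  proof (rule sum.mono_neutral_left)
    show "\<forall>x\<in>{..d} \<times> {..d} - {(i, j). i + j \<le> d}. (\<lambda>(i, j). \<Sum>e\<le>d. f i j e) x = 0"
    proof
      fix x assume "x \<in> {..d} \<times> {..d} - {(i, j). i + j \<le> d}"
      then obtain i j where "x = (i, j)" "d < i + j" by auto
      then show "(\<lambda>(i, j). \<Sum>e\<le>d. f i j e) x = 0" by (simp add: vanish)
    qed
  qed auto
  also have "\<dots> = (\<Sum>i\<le>d. \<Sum>j\<le>d. \<Sum>e\<le>d. f i j e)"
    by (rule sum.cartesian_product[symmetric])
  also have "\<dots> = (\<Sum>i\<le>d. \<Sum>e\<le>d. \<Sum>j\<le>d. f i j e)"
    by (rule sum.cong[OF refl], rule sum.swap)
  also have "\<dots> = (\<Sum>e\<le>d. \<Sum>i\<le>d. \<Sum>j\<le>d. f i j e)"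
    by (rule sum.swap)
  also have "\<dots> = (\<Sum>e\<le>d. (\<Sum>i\<le>d. P $ i $ e) * (\<Sum>j\<le>d. Q $ j $ (d - e)))"
    by (simp add: sum_product f_def)
  also have "\<dots> = (eval_at_one P * eval_at_one Q) $ d"
    unfolding fps_mult_nth atLeast0AtMost
    by (intro sum.cong refl) (simp add: eval_at_one_nth_le[OF P, of _ d] eval_at_one_nth_le[OF Q, of _ d])
  finally show "eval_at_one (P * Q) $ d = (eval_at_one P * eval_at_one Q) $ d" .
qed

definition pos_series :: "(nat \<Rightarrow> 'a::zero) \<Rightarrow> 'a fps" where
  "pos_series y = Abs_fps (\<lambda>k. if k = 0 then 0 else y k)"

lemma mult_pos_series_nth:
  fixes f :: "'a::comm_semiring_1 fps"
  shows "(f * pos_series y) $ d = (\<Sum>e<d. f $ e * y (d - e))"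
proof -
  have "(f * pos_series y) $ d = (\<Sum>e<Suc d. f $ e * pos_series y $ (d - e))"
    by (simp add: fps_mult_nth atLeast0AtMost lessThan_Suc_atMost)
  also have "\<dots> = (\<Sum>e<d. f $ e * y (d - e))"
    by (auto simp: pos_series_def intro!: sum.cong)
  finally show ?thesis .
qed

text \<open>Weight of a step p < c of a chain: in F, and in the claimed formula for y'_d.\<close>

definition F_step :: "(nat \<Rightarrow> 'a::comm_semiring_1) \<Rightarrow> (nat \<Rightarrow> 'a) \<Rightarrow> nat \<Rightarrow> nat \<Rightarrow> 'a" where
  "F_step x y p c = y (c - p) + x (c - p) * of_nat p"

definition G_step :: "(nat \<Rightarrow> 'a::comm_semiring_1) \<Rightarrow> (nat \<Rightarrow> 'a) \<Rightarrow> nat \<Rightarrow> nat \<Rightarrow> 'a" where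
  "G_step x y p c = (if p = 0 then y c else x (c - p) * of_nat p)"

definition F_part :: "(nat \<Rightarrow> 'a::comm_semiring_1) \<Rightarrow> (nat \<Rightarrow> 'a) \<Rightarrow> nat \<Rightarrow> 'a fps" where
  "F_part x y n = Abs_fps (chain_sum (F_step x y) n)"

definition G_part :: "(nat \<Rightarrow> 'a::comm_semiring_1) \<Rightarrow> (nat \<Rightarrow> 'a) \<Rightarrow> nat \<Rightarrow> 'a fps" where
  "G_part x y n = Abs_fps (chain_sum (G_step x y) (Suc n))"

definition F_log :: "(nat \<Rightarrow> 'a::field_char_0) \<Rightarrow> (nat \<Rightarrow> 'a) \<Rightarrow> 'a fps" where
  "F_log x y = eval_at_one (egf (case_nat 0 (G_part x y)))"

lemma F_part_0: "F_part x y 0 = 1"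
  by (rule fps_ext) (simp add: F_part_def chain_sum_0)

lemma F_part_Suc:
  "F_part x y (Suc n) = F_part x y n * pos_series y + fps_theta (F_part x y n) * pos_series x"
  by (rule fps_ext)
    (simp add: F_part_def mult_pos_series_nth chain_sum_Suc,
      simp add: F_step_def sum.distrib algebra_simps)

lemma G_part_0: "G_part x y 0 = pos_series y"
  by (rule fps_ext) (simp add: G_part_def chain_sum_1 G_step_def pos_series_def)

lemma G_part_Suc: "G_part x y (Suc n) = fps_theta (G_part x y n) * pos_series x"
  by (rule fps_ext)
    (auto simp: G_part_def mult_pos_series_nth chain_sum_Suc[of _ "Suc n"] G_step_def
      chain_sum_eq_0 intro!: sum.cong)

lemma F_series_eq_eval_at_one: "F_series x y = eval_at_one (egf (F_part x y))"
proof (rule fps_ext)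
  fix d
  have "F_series x y $ d = F_coeff x y d"
    by (simp add: F_series_def)
  also have "\<dots> =
      (\<Sum>n\<le>d. \<Sum>ds\<in>chains_len n d. inverse (fact n) * chain_weight (F_step x y) ds)"
    unfolding F_coeff_def sum_chains_by_length
    by (intro sum.cong refl)
      (simp add: chains_len_def chain_weight_def F_step_def Let_def divide_inverse mult.commute)
  also have "\<dots> = eval_at_one (egf (F_part x y)) $ d"
    by (simp add: eval_at_one_nth F_part_def chain_sum_def sum_distrib_left)
  finally show "F_series x y $ d = eval_at_one (egf (F_part x y)) $ d" .
qed

lemma chain_weight_G_step:
  assumes "ds \<in> chains d" "ds \<noteq> []"
  shows "chain_weight (G_step x y) ds = (let L = 0 # ds in
    y (L!1) * (\<Prod>i\<in>{2..length ds}. x (L!i - L!(i-1)) * of_nat (L!(i-1))))"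
proof -
  let ?L = "0 # ds"
  have sorted: "sorted_wrt (<) ?L" using assms(1) by (simp add: chains_def)
  have "chain_weight (G_step x y) ds =
      G_step x y (?L!0) (?L!1) * (\<Prod>i\<in>{Suc 1..length ds}. G_step x y (?L!(i-1)) (?L!i))"
    unfolding chain_weight_def using assms(2) by (subst prod.atLeast_Suc_atMost) (auto simp: Suc_le_eq)
  also have "(\<Prod>i\<in>{Suc 1..length ds}. G_step x y (?L!(i-1)) (?L!i)) =
      (\<Prod>i\<in>{2..length ds}. x (?L!i - ?L!(i-1)) * of_nat (?L!(i-1)))"
  proof (intro prod.cong refl)
    fix i assume "i \<in> {2..length ds}"
    then have "?L!0 < ?L!(i-1)" using sorted_wrt_nth_less[OF sorted, of 0 "i-1"] by auto
    then show "G_step x y (?L!(i-1)) (?L!i) = x (?L!i - ?L!(i-1)) * of_nat (?L!(i-1))"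
      by (simp add: G_step_def)
  qed auto
  also have "G_step x y (?L!0) (?L!1) = y (?L!1)"
    by (simp add: G_step_def)
  finally show ?thesis by (simp only: Let_def)
qed

lemma F_log_nth:
  assumes "d \<ge> 1"
  shows "F_log x y $ d = (\<Sum>ds\<in>chains d. let L = 0 # ds in
    (y (L!1) * (\<Prod>i\<in>{2..length ds}. x (L!i - L!(i-1)) * of_nat (L!(i-1)))) / fact (length ds))"
    (is "_ = (\<Sum>ds\<in>chains d. ?term ds)")
proof -
  have "(\<Sum>ds\<in>chains_len n d. ?term ds) = egf (case_nat 0 (G_part x y)) $ n $ d" for n
  proof (cases n)
    case 0
    then show ?thesis using assms by (simp add: chains_len_0)
  next
    case (Suc m)
    have "?term ds = inverse (fact n) * chain_weight (G_step x y) ds" if "ds \<in> chains_len n d" for ds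
    proof -
      have "ds \<in> chains d" "length ds = n" using that by (auto simp: chains_len_def)
      moreover from this have "ds \<noteq> []" using Suc by auto
      ultimately show ?thesis by (simp add: chain_weight_G_step Let_def divide_inverse mult.commute)
    qed
    then show ?thesis
      using Suc by (simp add: G_part_def chain_sum_def sum_distrib_left)
  qed
  then show ?thesis
    by (simp add: F_log_def eval_at_one_nth sum_chains_by_length)
qed

lemma fps_theta_F_series: "fps_theta (F_series x y) = fps_theta (F_log x y) * F_series x y"
proof -
  have graded_F: "fps_graded (egf (F_part x y))"
    by (intro fps_graded_egf) (simp add: F_part_def chain_sum_eq_0)
  have graded_G: "fps_graded (egf (case_nat 0 (G_part x y)))"
    by (intro fps_graded_egf) (simp add: G_part_def chain_sum_eq_0 split: nat.split)
  have "fps_theta_coeffs (egf (F_part x y)) =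
      fps_theta_coeffs (egf (case_nat 0 (G_part x y))) * egf (F_part x y)"
    by (rule fps_theta_coeffs_egf_a_eq_mult[where a = "F_part x y" and b = "G_part x y"
          and X = "pos_series x" and Y = "pos_series y"])
      (simp_all add: F_part_0 F_part_Suc G_part_0 G_part_Suc)
  then have "eval_at_one (fps_theta_coeffs (egf (F_part x y))) =
      eval_at_one (fps_theta_coeffs (egf (case_nat 0 (G_part x y)))) * eval_at_one (egf (F_part x y))"
    by (simp add: eval_at_one_mult graded_F graded_G fps_graded_theta_coeffs)
  then show ?thesis
    by (simp add: F_log_def F_series_eq_eval_at_one eval_at_one_theta_coeffs)
qed

theorem mainTheorem17:
  fixes x y y' :: "nat \<Rightarrow> 'a::field_char_0"
  assumes "F_series x y = fps_compose (fps_exp 1) (Abs_fps (\<lambda>d. if d = 0 then 0 else y' d))"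
  shows "\<forall>d\<ge>1. y' d = (\<Sum>ds\<in>chains d. let L = 0 # ds in
            (y (L!1) * (\<Prod>i\<in>{2..length ds}. x (L!i - L!(i-1)) * of_nat (L!(i-1))))
            / fact (length ds))"
proof -
  define Y' where "Y' = Abs_fps (\<lambda>d. if d = 0 then 0 else y' d)"
  have "F_series x y $ 0 = 1"
    using assms by simp
  then have F_nonzero: "F_series x y \<noteq> 0"
    by auto
  have "fps_deriv (F_series x y) = F_series x y * fps_deriv Y'"
    using assms by (simp add: fps_compose_deriv Y'_def)
  then have "fps_theta (F_series x y) = fps_theta Y' * F_series x y"
    by (simp add: fps_theta_def algebra_simps)
  then have "fps_theta Y' = fps_theta (F_log x y)"
    using fps_theta_F_series[of x y] F_nonzero by simp
  then have "y' d = F_log x y $ d" if "d \<ge> 1" for d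
    using fps_theta_eq_imp_nth_eq[of Y' "F_log x y" d] that by (simp add: Y'_def)
  then show ?thesis
    by (simp add: F_log_nth)
qed

end
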